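(* Let $\Gamma$ be an analytic Jordan curve with interior $G_1$, exterior $G_2=\mathbb{C}_\infty\setminus(\Gamma\cup G_1)$, $u_0\in\Gamma$, and let $\Phi_1:\mathbb{D}\to G_1$, $\Phi_2:\mathbb{D}^*\to G_2$ be conformal bijections, extended analytically and injectively across the unit circle, with $\Phi_j(1)=u_0$ and $|\Phi_j'(1)|=1$ ($j=1,2$). Put $F:=\Phi_2^{-1}\circ\Phi_1$ (defined and analytic in a neighbourhood of the unit circle), and for $a\in\mathbb{D}^*$ and $\xi$ near the unit circle put $$H(a,\xi):=\frac{B(a,F(\xi))}{B(a,\xi)}.$$ Let $K\subset\mathbb{D}^*$ be closed in $\mathbb{C}_\infty$. Then there exist $\delta>0$ and $C>0$ such that for all $a\in K$ and all $\xi$ with $1\le|\xi|\le1+\delta$, $$\log|H(a,\xi)|\le C\,(|\xi|-1)\,|\xi-1|.$$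
   Context: $\mathbb{D}=\{|v|<1\}$, $\mathbb{D}^*=\{|v|>1\}\cup\{\infty\}$. $B(a,v)=\frac{1-\bar a v}{v-a}$ is the Blaschke factor with pole at $a\in\mathbb{D}^*\setminus\{\infty\}$, and $B(\infty,v):=v$; thus $\log|B(a,v)|=g_{\mathbb{D}^*}(v,a)$ for $|v|>1$. Note $F(1)=1$, $F'(1)=1$, and $F$ maps the unit circle onto itself. An analytic Jordan curve is the image of the unit circle under a function analytic and injective on an annulus containing it. *)

theory Defs
  imports "HOL-Analysis.Analysis"
begin

text \<open>The Riemann sphere \<open>\<complex>\<^sub>\<infinity>\<close> is modelled as \<open>complex option\<close>,
  with \<open>None\<close> playing the role of the point \<open>\<infinity>\<close>.\<close>

type_synonym riem = "complex option"

definition rs_inv :: "riem \<Rightarrow> riem" where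
  "rs_inv p = (case p of None \<Rightarrow> Some 0
                | Some z \<Rightarrow> (if z = 0 then None else Some (1 / z)))"

definition rs_chart_loc :: "(riem \<Rightarrow> riem) \<Rightarrow> riem \<Rightarrow> complex \<Rightarrow> riem" where
  "rs_chart_loc f p w = (case p of Some z \<Rightarrow> f (Some (z + w)) | None \<Rightarrow> f (rs_inv (Some w)))"

text \<open>Analyticity of a map between Riemann spheres at a point: locally, in the
  chart, either the map is finite-valued and holomorphic, or it avoids 0 and its
  reciprocal (target chart at \<open>\<infinity>\<close>) is holomorphic.\<close>
definition rs_analytic_at :: "(riem \<Rightarrow> riem) \<Rightarrow> riem \<Rightarrow> bool" where
  "rs_analytic_at f p \<longleftrightarrow> (\<exists>e>0.
      ((\<forall>w\<in>ball 0 e. rs_chart_loc f p w \<noteq> None) \<and>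
         (\<lambda>w. the (rs_chart_loc f p w)) holomorphic_on ball 0 e)
    \<or> ((\<forall>w\<in>ball 0 e. rs_chart_loc f p w \<noteq> Some 0) \<and>
         (\<lambda>w. the (rs_inv (rs_chart_loc f p w))) holomorphic_on ball 0 e))"

definition rs_analytic_on :: "(riem \<Rightarrow> riem) \<Rightarrow> riem set \<Rightarrow> bool" where
  "rs_analytic_on f S \<longleftrightarrow> (\<forall>p\<in>S. rs_analytic_at f p)"

definition rs_closed :: "riem set \<Rightarrow> bool" where
  "rs_closed K \<longleftrightarrow> closed {z. Some z \<in> K} \<and> (None \<notin> K \<longrightarrow> bounded {z. Some z \<in> K})"

definition ext_disc :: "real \<Rightarrow> riem set" where
  "ext_disc \<rho> = insert None (Some ` {v. norm v > \<rho>})"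

abbreviation Dstar :: "riem set" where "Dstar \<equiv> ext_disc 1"

definition blaschke :: "riem \<Rightarrow> complex \<Rightarrow> complex" where
  "blaschke a v = (case a of None \<Rightarrow> v | Some a' \<Rightarrow> (1 - cnj a' * v) / (v - a'))"

definition analytic_jordan_curve :: "complex set \<Rightarrow> bool" where
  "analytic_jordan_curve \<Gamma> \<longleftrightarrow> (\<exists>\<psi> r1 r2. r1 < 1 \<and> 1 < r2 \<and>
      \<psi> holomorphic_on {z. r1 < norm z \<and> norm z < r2} \<and>
      inj_on \<psi> {z. r1 < norm z \<and> norm z < r2} \<and>
      \<Gamma> = \<psi> ` sphere 0 1)"

end

theory Submission
  imports Defs "HOL-Complex_Analysis.Complex_Analysis"
begin

(* Because Phi1 and Phi2 extend injectively across the unit circle, F = Phi2^-1 o Phi1 is holomorphic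
   near the circle, maps the circle into itself, fixes 1 with |F'(1)| = 1 and maps |xi| > 1 into
   |F xi| >= 1.  A first-order Taylor expansion of F at the radial projection xi/|xi|, together with
   the Lipschitz continuity of F' along the circle, gives
     |F xi| <= |xi| + C (|xi| - 1) |xi - 1|   and   |F xi - 1| <= L |xi - 1|.
   For a = infinity, log |H| = log (|F xi| / |xi|) is at most the excess of |F xi| over |xi|.  For a
   finite pole, bounded away from the circle, |B(a,w)|^2 = 1 + (|w|^2 - 1)(|a|^2 - 1)/|w - a|^2;
   comparing this at w = F xi and w = xi bounds log |H| by (|F xi|^2 - 1) O(|F xi - xi|) plus
   O(max 0 (|F xi|^2 - |xi|^2)), and both terms are O((|xi| - 1) |xi - 1|). *)

lemma norm_minus_sgn:
  fixes x :: "'a::real_normed_vector"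
  assumes "x \<noteq> 0"
  shows "norm (x - sgn x) = \<bar>norm x - 1\<bar>"
proof -
  have "x - sgn x = (norm x - 1) *\<^sub>R sgn x"
    using assms by (simp add: sgn_div_norm algebra_simps)
  then show ?thesis
    using assms by (simp add: norm_sgn)
qed

lemma sphere_thickening_subset:
  fixes U :: "'a::euclidean_space set"
  assumes "open U" "sphere 0 1 \<subseteq> U"
  obtains \<epsilon> where "0 < \<epsilon>" "\<And>x. \<bar>norm x - 1\<bar> \<le> \<epsilon> \<Longrightarrow> x \<in> U"
proof -
  obtain e where e: "0 < e" "\<And>x. x \<in> sphere 0 1 \<Longrightarrow> ball x e \<subseteq> U"
    by (rule Heine_Borel_lemma[of "sphere (0::'a) 1" "{U}"]) (use assms in auto)
  show thesis
  proof
    show "0 < min (1/2) (e/2)"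
      using e by auto
    fix x :: 'a
    assume x: "\<bar>norm x - 1\<bar> \<le> min (1/2) (e/2)"
    then have "x \<noteq> 0"
      by auto
    then have "sgn x \<in> sphere 0 1" "x \<in> ball (sgn x) e"
      using x e norm_minus_sgn[of x] by (auto simp: norm_sgn dist_norm norm_minus_commute)
    then show "x \<in> U"
      using e by blast
  qed
qed

lemma closed_outside_cball_gap:
  fixes S :: "'a::euclidean_space set"
  assumes "closed S" "\<And>z. z \<in> S \<Longrightarrow> 1 < norm z"
  obtains d where "0 < d" "\<And>z. z \<in> S \<Longrightarrow> 1 + d \<le> norm z"
proof (cases "S = {}")
  case False
  have "cball 0 1 \<inter> S = {}"
    using assms(2) by force
  then have "setdist (cball (0::'a) 1) S \<noteq> 0"
    using setdist_eq_0_compact_closed[of "cball (0::'a) 1" S] assms(1) False by simp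
  then have gap: "0 < setdist (cball (0::'a) 1) S"
    using setdist_pos_le[of "cball (0::'a) 1" S] by linarith
  have "1 + setdist (cball 0 1) S \<le> norm z" if z: "z \<in> S" for z
  proof -
    have "z \<noteq> 0"
      using assms(2)[OF z] by auto
    then have "setdist (cball 0 1) S \<le> dist (sgn z) z"
      using z by (intro setdist_le_dist) (auto simp: norm_sgn)
    also have "\<dots> = norm z - 1"
      using norm_minus_sgn[OF \<open>z \<noteq> 0\<close>] assms(2)[OF z] by (simp add: dist_norm norm_minus_commute)
    finally show ?thesis
      by simp
  qed
  then show thesis
    using gap that by blast
qed (rule that[of 1], auto)

lemma field_differentiable_bound_bounded:
  fixes f :: "'a::real_normed_field \<Rightarrow> 'a"
  assumes "0 < \<epsilon>"
    and deriv: "\<And>x. x \<in> cball z \<epsilon> \<Longrightarrow> (f has_field_derivative f' x) (at x within cball z \<epsilon>)"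
    and deriv_bound: "\<And>x. x \<in> cball z \<epsilon> \<Longrightarrow> norm (f' x) \<le> M'"
    and bound: "\<And>x. x \<in> T \<Longrightarrow> norm (f x) \<le> M"
    and "z \<in> T" "x \<in> T"
  shows "norm (f x - f z) \<le> (M' + 2 * M / \<epsilon>) * norm (x - z)"
proof -
  have "0 \<le> M'" "0 \<le> M"
    using deriv_bound[of z] bound[OF \<open>z \<in> T\<close>] \<open>0 < \<epsilon>\<close> by (auto intro: order_trans[OF norm_ge_zero])
  show ?thesis
  proof (cases "norm (x - z) \<le> \<epsilon>")
    case True
    then have "norm (f x - f z) \<le> M' * norm (x - z)"
      using \<open>0 < \<epsilon>\<close> by (intro field_differentiable_bound[OF convex_cball deriv deriv_bound])
        (auto simp: dist_norm norm_minus_commute)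
    also have "\<dots> \<le> (M' + 2 * M / \<epsilon>) * norm (x - z)"
      using \<open>0 \<le> M\<close> \<open>0 < \<epsilon>\<close> by (intro mult_right_mono) auto
    finally show ?thesis .
  next
    case False
    have "norm (f x - f z) \<le> 2 * M"
      using norm_triangle_ineq4[of "f x" "f z"] bound[OF \<open>z \<in> T\<close>] bound[OF \<open>x \<in> T\<close>] by linarith
    also have "\<dots> \<le> (2 * M / \<epsilon>) * norm (x - z)"
      using False \<open>0 \<le> M\<close> \<open>0 < \<epsilon>\<close> by (simp add: field_simps mult_left_mono)
    also have "\<dots> \<le> (M' + 2 * M / \<epsilon>) * norm (x - z)"
      using \<open>0 \<le> M'\<close> by (intro mult_right_mono) auto
    finally show ?thesis .
  qed
qed

lemma holomorphic_first_order_Taylor: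
  assumes "f holomorphic_on U" "open U" "convex S" "S \<subseteq> U"
    and "\<And>x. x \<in> S \<Longrightarrow> norm (deriv (deriv f) x) \<le> M" "w \<in> S" "z \<in> S"
  shows "norm (f z - (f w + deriv f w * (z - w))) \<le> M * norm (z - w) ^ 2"
proof -
  define g where "g = (\<lambda>i::nat. (deriv ^^ i) f)"
  have "g i holomorphic_on U" for i
    unfolding g_def by (induction i) (auto intro: holomorphic_deriv \<open>open U\<close> assms(1))
  then have "(g i has_field_derivative g (Suc i) x) (at x within S)" if "x \<in> S" for i x
    using holomorphic_derivI[OF _ \<open>open U\<close>, of "g i" x S] that \<open>S \<subseteq> U\<close> by (auto simp: g_def)
  then have "norm (g 0 z - (\<Sum>i\<le>1. g i w * (z - w) ^ i / fact i)) \<le> M * norm (z - w) ^ Suc 1 / fact 1"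
    using assms(5-7) by (intro complex_Taylor[OF \<open>convex S\<close>]) (auto simp: g_def numeral_2_eq_2)
  then show ?thesis
    by (simp add: g_def numeral_2_eq_2)
qed

lemma norm_radial_Taylor_le:
  fixes \<xi> w a D :: complex
  assumes \<xi>: "1 \<le> norm \<xi>" and a: "norm a = 1"
    and D: "norm D \<le> 1 + L * norm (sgn \<xi> - 1)" "0 \<le> L"
    and Taylor: "norm (w - (a + D * (\<xi> - sgn \<xi>))) \<le> M * norm (\<xi> - sgn \<xi>) ^ 2" "0 \<le> M"
  shows "norm w \<le> norm \<xi> + (2 * L + M) * (norm \<xi> - 1) * norm (\<xi> - 1)"
proof -
  define t where "t = norm \<xi> - 1"
  define e where "e = norm (\<xi> - 1)"
  have "\<xi> \<noteq> 0"
    using \<xi> by auto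
  then have t: "norm (\<xi> - sgn \<xi>) = t" "0 \<le> t"
    using norm_minus_sgn[of \<xi>] \<xi> by (auto simp: t_def)
  have te: "t \<le> e"
    using norm_triangle_ineq2[of \<xi> 1] by (simp add: t_def e_def)
  have "norm (sgn \<xi> - 1) \<le> norm (sgn \<xi> - \<xi>) + norm (\<xi> - 1)"
    using norm_triangle_ineq[of "sgn \<xi> - \<xi>" "\<xi> - 1"] by simp
  then have "norm (sgn \<xi> - 1) \<le> 2 * e"
    using t te by (simp add: norm_minus_commute e_def)
  then have nD: "norm D \<le> 1 + 2 * L * e"
    using D mult_left_mono[of "norm (sgn \<xi> - 1)" "2 * e" L] by simp
  have "norm w \<le> norm (a + D * (\<xi> - sgn \<xi>)) + M * t ^ 2"
    using Taylor(1) norm_triangle_ineq2[of w "a + D * (\<xi> - sgn \<xi>)"] t by simp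
  also have "\<dots> \<le> 1 + norm D * t + M * t ^ 2"
    using norm_triangle_ineq[of a "D * (\<xi> - sgn \<xi>)"] a t by (simp add: norm_mult)
  also have "\<dots> \<le> 1 + (1 + 2 * L * e) * t + M * (t * e)"
    using nD t te Taylor(2) by (intro add_mono mult_right_mono mult_left_mono)
      (auto simp: power2_eq_square intro: mult_left_mono)
  also have "\<dots> = norm \<xi> + (2 * L + M) * (norm \<xi> - 1) * norm (\<xi> - 1)"
    by (simp add: t_def e_def algebra_simps)
  finally show ?thesis .
qed

lemma holomorphic_derivs_bounded_near_circle:
  assumes holo: "f holomorphic_on U" and "open U" "sphere 0 1 \<subseteq> U"
  obtains \<epsilon> M where "0 < \<epsilon>" "0 \<le> M" "{x. \<bar>norm x - 1\<bar> \<le> \<epsilon>} \<subseteq> U"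
    "\<And>x. \<bar>norm x - 1\<bar> \<le> \<epsilon> \<Longrightarrow>
       norm (f x) \<le> M \<and> norm (deriv f x) \<le> M \<and> norm (deriv (deriv f) x) \<le> M"
proof -
  obtain \<epsilon> where \<epsilon>: "0 < \<epsilon>" and thick: "\<And>x. \<bar>norm x - 1\<bar> \<le> \<epsilon> \<Longrightarrow> x \<in> U"
    using sphere_thickening_subset[OF \<open>open U\<close> \<open>sphere 0 1 \<subseteq> U\<close>] by blast
  define A where "A = {x::complex. \<bar>norm x - 1\<bar> \<le> \<epsilon>}"
  have "A = cball 0 (1 + \<epsilon>) - ball 0 (1 - \<epsilon>)"
    by (auto simp: A_def)
  then have "compact A"
    by (simp add: compact_diff)
  have "A \<subseteq> U"
    using thick by (auto simp: A_def)
  have "bounded (g ` A)" if "g holomorphic_on U" for g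
    using that \<open>compact A\<close> \<open>A \<subseteq> U\<close>
    by (meson compact_continuous_image compact_imp_bounded continuous_on_subset holomorphic_on_imp_continuous_on)
  moreover have "deriv f holomorphic_on U" "deriv (deriv f) holomorphic_on U"
    using holo \<open>open U\<close> by (auto intro: holomorphic_deriv)
  ultimately have "bounded (f ` A \<union> deriv f ` A \<union> deriv (deriv f) ` A)"
    using holo by simp
  then obtain M where "0 < M" "\<And>y. y \<in> f ` A \<union> deriv f ` A \<union> deriv (deriv f) ` A \<Longrightarrow> norm y \<le> M"
    unfolding bounded_pos by blast
  then show thesis
    using that[of \<epsilon> M] \<epsilon> \<open>A \<subseteq> U\<close> by (auto simp: A_def)
qed

lemma holomorphic_estimates_near_circle:
  assumes holo: "f holomorphic_on U" and "open U" "sphere 0 1 \<subseteq> U"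
  obtains \<epsilon> M L where "0 < \<epsilon>" "0 \<le> M" "0 \<le> L" "{x. \<bar>norm x - 1\<bar> \<le> \<epsilon>} \<subseteq> U"
    "\<And>x. \<bar>norm x - 1\<bar> \<le> \<epsilon> \<Longrightarrow>
       norm (f x - f 1) \<le> L * norm (x - 1) \<and> norm (deriv f x - deriv f 1) \<le> L * norm (x - 1)"
    "\<And>\<zeta> \<xi>. norm \<zeta> = 1 \<Longrightarrow> norm (\<xi> - \<zeta>) \<le> \<epsilon> \<Longrightarrow>
       norm (f \<xi> - (f \<zeta> + deriv f \<zeta> * (\<xi> - \<zeta>))) \<le> M * norm (\<xi> - \<zeta>) ^ 2"
proof -
  obtain \<epsilon> M where \<epsilon>: "0 < \<epsilon>" and "0 \<le> M" and A_U: "{x. \<bar>norm x - 1\<bar> \<le> \<epsilon>} \<subseteq> U"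
    and M: "\<And>x. \<bar>norm x - 1\<bar> \<le> \<epsilon> \<Longrightarrow>
       norm (f x) \<le> M \<and> norm (deriv f x) \<le> M \<and> norm (deriv (deriv f) x) \<le> M"
    using holomorphic_derivs_bounded_near_circle[OF holo \<open>open U\<close> \<open>sphere 0 1 \<subseteq> U\<close>] by blast
  define A where "A = {x::complex. \<bar>norm x - 1\<bar> \<le> \<epsilon>}"
  have near: "\<bar>norm x - 1\<bar> \<le> \<epsilon>" if "norm \<zeta> = 1" "norm (x - \<zeta>) \<le> \<epsilon>" for \<zeta> x :: complex
    using that norm_triangle_ineq3[of x \<zeta>] by linarith
  have cball_A: "cball \<zeta> \<epsilon> \<subseteq> A" if "norm \<zeta> = 1" for \<zeta>
  proof
    fix x assume "x \<in> cball \<zeta> \<epsilon>"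
    then show "x \<in> A"
      using near[OF that, of x] by (simp add: A_def dist_norm norm_minus_commute)
  qed
  have derivs: "(f has_field_derivative deriv f x) (at x within S)"
    "(deriv f has_field_derivative deriv (deriv f) x) (at x within S)" if "x \<in> A" for x S
    using holomorphic_derivI[OF holo \<open>open U\<close>] holo \<open>open U\<close> that A_U
    by (auto simp: A_def intro: holomorphic_derivI holomorphic_deriv)
  have one: "norm (1::complex) = 1" "(1::complex) \<in> A"
    using \<epsilon> by (auto simp: A_def)
  define L where "L = M + 2 * M / \<epsilon>"
  have "norm (f x - f 1) \<le> L * norm (x - 1)" "norm (deriv f x - deriv f 1) \<le> L * norm (x - 1)"
    if "x \<in> A" for x
    unfolding L_def using \<epsilon> cball_A[OF one(1)] M derivs that one
    by (intro field_differentiable_bound_bounded[where T = A and f' = "deriv f"]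
        field_differentiable_bound_bounded[where T = A and f' = "deriv (deriv f)"]; auto simp: A_def)+
  moreover have "norm (f \<xi> - (f \<zeta> + deriv f \<zeta> * (\<xi> - \<zeta>))) \<le> M * norm (\<xi> - \<zeta>) ^ 2"
    if "norm \<zeta> = 1" "norm (\<xi> - \<zeta>) \<le> \<epsilon>" for \<zeta> \<xi>
    using A_U M \<epsilon> that near[OF that(1)]
    by (intro holomorphic_first_order_Taylor[OF holo \<open>open U\<close> convex_cball])
      (auto simp: dist_norm norm_minus_commute)
  moreover have "0 \<le> L"
    using \<open>0 \<le> M\<close> \<epsilon> by (simp add: L_def)
  ultimately show thesis
    using that[of \<epsilon> M L] \<epsilon> \<open>0 \<le> M\<close> A_U by (auto simp: A_def)
qed

lemma circle_preserving_growth: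
  assumes holo: "f holomorphic_on U" and "open U" and circle: "sphere 0 1 \<subseteq> U"
    and norm_circle: "\<And>\<zeta>. norm \<zeta> = 1 \<Longrightarrow> norm (f \<zeta>) = 1"
    and deriv_1: "norm (deriv f 1) = 1"
  obtains \<epsilon> C L where "0 < \<epsilon>" "0 < C" "0 < L"
    "\<And>\<xi>. 1 \<le> norm \<xi> \<Longrightarrow> norm \<xi> \<le> 1 + \<epsilon> \<Longrightarrow>
       \<xi> \<in> U \<and> norm (f \<xi>) \<le> norm \<xi> + C * (norm \<xi> - 1) * norm (\<xi> - 1) \<and>
       norm (f \<xi> - f 1) \<le> L * norm (\<xi> - 1)"
proof -
  obtain \<epsilon> M L where "0 < \<epsilon>" "0 \<le> M" "0 \<le> L" and A_U: "{x. \<bar>norm x - 1\<bar> \<le> \<epsilon>} \<subseteq> U"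
    and Lip: "\<And>x. \<bar>norm x - 1\<bar> \<le> \<epsilon> \<Longrightarrow>
       norm (f x - f 1) \<le> L * norm (x - 1) \<and> norm (deriv f x - deriv f 1) \<le> L * norm (x - 1)"
    and Taylor: "\<And>\<zeta> \<xi>. norm \<zeta> = 1 \<Longrightarrow> norm (\<xi> - \<zeta>) \<le> \<epsilon> \<Longrightarrow>
       norm (f \<xi> - (f \<zeta> + deriv f \<zeta> * (\<xi> - \<zeta>))) \<le> M * norm (\<xi> - \<zeta>) ^ 2"
    using holomorphic_estimates_near_circle[OF holo \<open>open U\<close> circle] by blast
  have growth: "norm (f \<xi>) \<le> norm \<xi> + (2 * L + M) * (norm \<xi> - 1) * norm (\<xi> - 1)"
    if \<xi>: "1 \<le> norm \<xi>" "norm \<xi> \<le> 1 + \<epsilon>" for \<xi>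
  proof (rule norm_radial_Taylor_le[OF \<xi>(1)])
    have "\<xi> \<noteq> 0"
      using \<xi> by auto
    then have sgn: "norm (sgn \<xi>) = 1" "norm (\<xi> - sgn \<xi>) \<le> \<epsilon>"
      using norm_minus_sgn[of \<xi>] \<xi> by (auto simp: norm_sgn)
    show "norm (f (sgn \<xi>)) = 1"
      using norm_circle sgn by blast
    show "norm (deriv f (sgn \<xi>)) \<le> 1 + L * norm (sgn \<xi> - 1)"
      using Lip[of "sgn \<xi>"] sgn \<open>0 < \<epsilon>\<close> norm_triangle_ineq2[of "deriv f (sgn \<xi>)" "deriv f 1"] deriv_1
      by auto
    show "norm (f \<xi> - (f (sgn \<xi>) + deriv f (sgn \<xi>) * (\<xi> - sgn \<xi>))) \<le> M * norm (\<xi> - sgn \<xi>) ^ 2"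
      using Taylor sgn by blast
  qed (use \<open>0 \<le> M\<close> \<open>0 \<le> L\<close> in auto)
  show thesis
  proof (rule that[of \<epsilon> "1 + 2 * L + M" "1 + L"])
    fix \<xi> :: complex
    assume \<xi>: "1 \<le> norm \<xi>" "norm \<xi> \<le> 1 + \<epsilon>"
    then have "0 \<le> (norm \<xi> - 1) * norm (\<xi> - 1)"
      by simp
    then show "\<xi> \<in> U \<and> norm (f \<xi>) \<le> norm \<xi> + (1 + 2 * L + M) * (norm \<xi> - 1) * norm (\<xi> - 1) \<and>
       norm (f \<xi> - f 1) \<le> (1 + L) * norm (\<xi> - 1)"
      using A_U growth[OF \<xi>] Lip[of \<xi>] \<xi> by (auto simp: algebra_simps intro: order_trans)
  qed (use \<open>0 < \<epsilon>\<close> \<open>0 \<le> M\<close> \<open>0 \<le> L\<close> in auto)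
qed

definition blaschke_weight :: "complex \<Rightarrow> complex \<Rightarrow> real" where
  "blaschke_weight \<alpha> w = (norm \<alpha> ^ 2 - 1) / norm (w - \<alpha>) ^ 2"

lemma norm_blaschke_Some_power2:
  assumes "w \<noteq> \<alpha>"
  shows "norm (blaschke (Some \<alpha>) w) ^ 2 = 1 + (norm w ^ 2 - 1) * blaschke_weight \<alpha> w"
proof -
  have "complex_of_real (norm (1 - cnj \<alpha> * w) ^ 2) =
        complex_of_real (norm (w - \<alpha>) ^ 2 + (norm w ^ 2 - 1) * (norm \<alpha> ^ 2 - 1))"
    unfolding of_real_add of_real_mult of_real_diff complex_norm_square of_real_1
    by (simp add: algebra_simps)
  then have "norm (1 - cnj \<alpha> * w) ^ 2 = norm (w - \<alpha>) ^ 2 + (norm w ^ 2 - 1) * (norm \<alpha> ^ 2 - 1)"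
    using of_real_eq_iff by blast
  moreover have "norm (w - \<alpha>) \<noteq> 0"
    using assms by auto
  ultimately show ?thesis
    by (simp add: blaschke_def blaschke_weight_def norm_divide power_divide field_simps)
qed

lemma blaschke_weight_bounds:
  assumes "0 < \<kappa>" "1 \<le> norm \<alpha>" "\<kappa> * norm \<alpha> \<le> norm (w - \<alpha>)"
  shows "0 \<le> blaschke_weight \<alpha> w" "blaschke_weight \<alpha> w \<le> 1 / \<kappa> ^ 2"
proof -
  have "0 \<le> norm \<alpha> ^ 2 - 1"
    using assms(2) by (simp add: one_le_power)
  then show "0 \<le> blaschke_weight \<alpha> w"
    by (simp add: blaschke_weight_def)
  have "0 < \<kappa> * norm \<alpha>"
    using assms by (intro mult_pos_pos) auto
  then have "0 < norm (w - \<alpha>)"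
    using assms(3) by linarith
  have "(\<kappa> * norm \<alpha>) ^ 2 \<le> norm (w - \<alpha>) ^ 2"
    using assms \<open>0 < \<kappa> * norm \<alpha>\<close> by (intro power_mono) auto
  then have "norm \<alpha> ^ 2 / norm (w - \<alpha>) ^ 2 \<le> 1 / \<kappa> ^ 2"
    using \<open>0 < \<kappa>\<close> \<open>0 < norm (w - \<alpha>)\<close> by (simp add: divide_simps power_mult_distrib mult.commute)
  then show "blaschke_weight \<alpha> w \<le> 1 / \<kappa> ^ 2"
    unfolding blaschke_weight_def by (smt (verit) divide_right_mono zero_le_power2)
qed

lemma blaschke_weight_lipschitz:
  assumes \<kappa>: "0 < \<kappa>" and \<alpha>: "1 \<le> norm \<alpha>"
    and w1: "\<kappa> * norm \<alpha> \<le> norm (w1 - \<alpha>)" and w2: "\<kappa> * norm \<alpha> \<le> norm (w2 - \<alpha>)"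
  shows "\<bar>blaschke_weight \<alpha> w1 - blaschke_weight \<alpha> w2\<bar> \<le> 2 * norm (w1 - w2) / \<kappa> ^ 3"
proof -
  define s where "s = 1 / (\<kappa> * norm \<alpha>)"
  define u1 u2 where "u1 = 1 / (w1 - \<alpha>)" and "u2 = 1 / (w2 - \<alpha>)"
  have pos: "0 < \<kappa> * norm \<alpha>"
    using \<kappa> \<alpha> by (intro mult_pos_pos) auto
  then have u: "norm u1 \<le> s" "norm u2 \<le> s"
    using w1 w2 by (simp_all add: u1_def u2_def s_def norm_divide divide_simps)
  have "w1 \<noteq> \<alpha>" "w2 \<noteq> \<alpha>"
    using pos w1 w2 by auto
  then have "u1 - u2 = (w2 - w1) * u1 * u2"
    by (simp add: u1_def u2_def field_simps)
  moreover have "norm u1 * norm u2 \<le> s * s"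
    using u order_trans[OF norm_ge_zero u(1)] by (intro mult_mono) auto
  ultimately have "norm (u1 - u2) \<le> norm (w1 - w2) * (s * s)"
    by (simp add: norm_mult norm_minus_commute mult.assoc mult_left_mono)
  then have u_diff: "\<bar>norm u1 - norm u2\<bar> * (norm u1 + norm u2) \<le> norm (w1 - w2) * s ^ 2 * (2 * s)"
    using norm_triangle_ineq3[of u1 u2] u by (intro mult_mono) (auto simp: power2_eq_square)
  have "0 \<le> norm \<alpha> ^ 2 - 1"
    using \<alpha> by (simp add: one_le_power)
  moreover have "blaschke_weight \<alpha> w1 - blaschke_weight \<alpha> w2 =
      (norm \<alpha> ^ 2 - 1) * ((norm u1 - norm u2) * (norm u1 + norm u2))"
    by (simp add: blaschke_weight_def u1_def u2_def norm_divide power_divide power2_eq_square algebra_simps)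
  ultimately have "\<bar>blaschke_weight \<alpha> w1 - blaschke_weight \<alpha> w2\<bar> =
      (norm \<alpha> ^ 2 - 1) * (\<bar>norm u1 - norm u2\<bar> * (norm u1 + norm u2))"
    by (simp add: abs_mult)
  also have "\<dots> \<le> norm \<alpha> ^ 2 * (norm (w1 - w2) * s ^ 2 * (2 * s))"
    by (rule mult_mono[OF _ u_diff]) auto
  also have "\<dots> = 2 * norm (w1 - w2) / (\<kappa> ^ 3 * norm \<alpha>)"
    using pos by (simp add: s_def field_simps power2_eq_square power3_eq_cube)
  also have "\<dots> \<le> 2 * norm (w1 - w2) / \<kappa> ^ 3"
    using \<alpha> \<kappa> by (intro divide_left_mono mult_pos_pos) (auto simp: mult_le_cancel_left1)
  finally show ?thesis .
qed

lemma ln_le_of_power2_eq_ratio: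
  fixes H X Y :: real
  assumes "0 \<le> H" "H ^ 2 = X / Y" "1 \<le> X" "1 \<le> Y"
  shows "ln H \<le> max 0 (X - Y)"
proof -
  have "0 < H"
    using assms by (metis divide_pos_pos less_eq_real_def less_le_trans power_zero_numeral zero_less_one)
  then have "ln H = ln (X / Y) / 2"
    using ln_realpow[of H 2] assms(2) by simp
  also have "\<dots> \<le> (X / Y - 1) / 2"
    using ln_le_minus_one[of "X / Y"] assms by simp
  also have "\<dots> = (X - Y) / (2 * Y)"
    using assms by (simp add: field_simps)
  also have "\<dots> \<le> max 0 (X - Y)"
  proof (cases "X \<le> Y")
    case False
    then have "X - Y \<le> (X - Y) * (2 * Y)"
      using mult_left_mono[of 1 "2 * Y" "X - Y"] \<open>1 \<le> Y\<close> by simp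
    then show ?thesis
      using \<open>1 \<le> Y\<close> by (simp add: divide_le_eq)
  qed (use \<open>1 \<le> Y\<close> in \<open>simp add: divide_nonpos_pos\<close>)
  finally show ?thesis .
qed

lemma ln_norm_blaschke_ratio_le:
  assumes \<kappa>: "0 < \<kappa>" and \<alpha>: "1 \<le> norm \<alpha>"
    and w1: "\<kappa> * norm \<alpha> \<le> norm (w1 - \<alpha>)" "1 \<le> norm w1"
    and w2: "\<kappa> * norm \<alpha> \<le> norm (w2 - \<alpha>)" "1 \<le> norm w2"
  shows "ln (norm (blaschke (Some \<alpha>) w1 / blaschke (Some \<alpha>) w2)) \<le>
     (norm w1 ^ 2 - 1) * (2 * norm (w1 - w2) / \<kappa> ^ 3) + max 0 (norm w1 ^ 2 - norm w2 ^ 2) / \<kappa> ^ 2"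
proof -
  define Q1 Q2 where "Q1 = blaschke_weight \<alpha> w1" and "Q2 = blaschke_weight \<alpha> w2"
  define X Y where "X = 1 + (norm w1 ^ 2 - 1) * Q1" and "Y = 1 + (norm w2 ^ 2 - 1) * Q2"
  have Q: "0 \<le> Q1" "0 \<le> Q2" "Q2 \<le> 1 / \<kappa> ^ 2" "\<bar>Q1 - Q2\<bar> \<le> 2 * norm (w1 - w2) / \<kappa> ^ 3"
    unfolding Q1_def Q2_def using blaschke_weight_bounds[OF \<kappa> \<alpha>] blaschke_weight_lipschitz[OF \<kappa> \<alpha>] w1 w2
    by auto
  have n: "0 \<le> norm w1 ^ 2 - 1" "0 \<le> norm w2 ^ 2 - 1"
    using w1 w2 by (simp_all add: one_le_power)
  have "w1 \<noteq> \<alpha>" "w2 \<noteq> \<alpha>"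
    using w1 w2 \<kappa> \<alpha> by (auto simp: mult_le_0_iff)
  then have "norm (blaschke (Some \<alpha>) w1 / blaschke (Some \<alpha>) w2) ^ 2 = X / Y"
    by (simp add: norm_divide power_divide norm_blaschke_Some_power2 X_def Y_def Q1_def Q2_def)
  then have "ln (norm (blaschke (Some \<alpha>) w1 / blaschke (Some \<alpha>) w2)) \<le> max 0 (X - Y)"
    using n Q by (intro ln_le_of_power2_eq_ratio) (auto simp: X_def Y_def)
  also have "X - Y = (norm w1 ^ 2 - 1) * (Q1 - Q2) + (norm w1 ^ 2 - norm w2 ^ 2) * Q2"
    by (simp add: X_def Y_def algebra_simps)
  also have "max 0 \<dots> \<le> (norm w1 ^ 2 - 1) * (2 * norm (w1 - w2) / \<kappa> ^ 3) +
      max 0 (norm w1 ^ 2 - norm w2 ^ 2) * (1 / \<kappa> ^ 2)"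
  proof -
    have "(norm w1 ^ 2 - 1) * (Q1 - Q2) \<le> (norm w1 ^ 2 - 1) * (2 * norm (w1 - w2) / \<kappa> ^ 3)"
      using Q n by (intro mult_left_mono) auto
    moreover have "(norm w1 ^ 2 - norm w2 ^ 2) * Q2 \<le> max 0 (norm w1 ^ 2 - norm w2 ^ 2) * (1 / \<kappa> ^ 2)"
      using Q by (intro mult_mono) auto
    moreover have "0 \<le> (norm w1 ^ 2 - 1) * (2 * norm (w1 - w2) / \<kappa> ^ 3)"
      using n \<kappa> by simp
    ultimately show ?thesis
      by (smt (verit) max.cobounded1 mult_nonneg_nonneg zero_le_divide_1_iff zero_le_power2)
  qed
  finally show ?thesis
    by simp
qed

lemma norm_diff_ge_of_gap:
  fixes \<alpha> w :: complex
  assumes "0 < d" "1 + d \<le> norm \<alpha>" "norm w \<le> 1 + d / 2"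
  shows "d / (2 * (1 + d)) * norm \<alpha> \<le> norm (w - \<alpha>)"
proof -
  have "(1 + d) * (2 + d) \<le> norm \<alpha> * (2 + d)"
    using mult_right_mono[OF assms(2), of "2 + d"] assms(1) by simp
  then have "d / (2 * (1 + d)) * norm \<alpha> \<le> norm \<alpha> - (1 + d / 2)"
    using assms(1) by (simp add: field_simps)
  also have "\<dots> \<le> norm (w - \<alpha>)"
    using assms(3) norm_triangle_ineq2[of \<alpha> w] by (simp add: norm_minus_commute)
  finally show ?thesis .
qed

lemma ln_norm_blaschke_None_ratio_le:
  fixes w \<xi> :: complex
  assumes "1 \<le> norm \<xi>" "1 \<le> norm w" "norm w \<le> norm \<xi> + r" "0 \<le> r"
  shows "ln (norm (blaschke None w / blaschke None \<xi>)) \<le> r"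
proof -
  have "ln (norm (blaschke None w / blaschke None \<xi>)) = ln (norm w / norm \<xi>)"
    by (simp add: blaschke_def norm_divide)
  also have "\<dots> \<le> norm w / norm \<xi> - 1"
    using assms by (intro ln_le_minus_one divide_pos_pos) auto
  also have "\<dots> = (norm w - norm \<xi>) / norm \<xi>"
    using assms(1) by (auto simp: diff_divide_distrib)
  also have "\<dots> \<le> r"
  proof -
    have "norm w - norm \<xi> \<le> r * norm \<xi>"
      using assms mult_left_mono[of 1 "norm \<xi>" r] by simp
    then show ?thesis
      using assms(1) by (auto simp: divide_le_eq)
  qed
  finally show ?thesis .
qed

lemma norm_perturbation_bounds:
  fixes w \<xi> :: complex and d C L :: real
  defines "t \<equiv> norm \<xi> - 1" and "e \<equiv> norm (\<xi> - 1)"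
  assumes d: "0 < d" "d \<le> 1" and C: "0 \<le> C"
    and \<xi>: "1 \<le> norm \<xi>" "(1 + 3 * C) * t \<le> d / 2"
    and w: "1 \<le> norm w" "norm w \<le> norm \<xi> + C * t * e" "norm (w - 1) \<le> L * e"
  shows "norm \<xi> \<le> 1 + d / 2" "norm w \<le> 1 + d / 2" "norm w ^ 2 - 1 \<le> 3 * (1 + 3 * C) * t"
    "norm (w - \<xi>) \<le> (L + 1) * e" "max 0 (norm w ^ 2 - norm \<xi> ^ 2) \<le> 4 * C * t * e"
proof -
  have t: "0 \<le> t" "t \<le> e" "norm \<xi> = 1 + t"
    using \<xi> norm_triangle_ineq2[of \<xi> 1] by (auto simp: t_def e_def)
  show \<xi>_small: "norm \<xi> \<le> 1 + d / 2"
    using t \<xi>(2) C mult_right_mono[of 1 "1 + 3 * C" t] by simp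
  then have "e \<le> 3"
    using norm_triangle_ineq4[of \<xi> 1] d by (simp add: e_def)
  then have w_t: "norm w \<le> 1 + (1 + 3 * C) * t"
    using w(2) t C mult_left_mono[of e 3 "C * t"] by (simp add: algebra_simps)
  then show w_small: "norm w \<le> 1 + d / 2"
    using \<xi>(2) by simp
  have "norm w ^ 2 - 1 = (norm w - 1) * (norm w + 1)"
    by (simp add: algebra_simps power2_eq_square)
  also have "\<dots> \<le> ((1 + 3 * C) * t) * 3"
    using w_t w_small w(1) d by (intro mult_mono) auto
  finally show "norm w ^ 2 - 1 \<le> 3 * (1 + 3 * C) * t"
    by (simp add: algebra_simps)
  have "norm (w - \<xi>) \<le> norm (w - 1) + norm (\<xi> - 1)"
    using norm_triangle_ineq[of "w - 1" "1 - \<xi>"] by (simp add: norm_minus_commute)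
  then show "norm (w - \<xi>) \<le> (L + 1) * e"
    using w(3) by (simp add: e_def algebra_simps)
  show "max 0 (norm w ^ 2 - norm \<xi> ^ 2) \<le> 4 * C * t * e"
  proof (cases "norm w \<le> norm \<xi>")
    case False
    have "norm w ^ 2 - norm \<xi> ^ 2 = (norm w - norm \<xi>) * (norm w + norm \<xi>)"
      by (simp add: algebra_simps power2_eq_square)
    also have "\<dots> \<le> (C * t * e) * 4"
      using False w(2) w_small \<xi>_small d by (intro mult_mono) auto
    finally show ?thesis
      using C t by (simp add: algebra_simps)
  qed (use C t power_mono[of "norm w" "norm \<xi>" 2] in auto)
qed

lemma ln_norm_blaschke_Some_ratio_le:
  fixes w \<xi> \<alpha> :: complex and d C L :: real
  defines "\<kappa> \<equiv> d / (2 * (1 + d))" and "t \<equiv> norm \<xi> - 1" and "e \<equiv> norm (\<xi> - 1)"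
  assumes d: "0 < d" "d \<le> 1" and \<alpha>: "1 + d \<le> norm \<alpha>" and C: "0 \<le> C" and L: "0 \<le> L"
    and \<xi>: "1 \<le> norm \<xi>" "(1 + 3 * C) * t \<le> d / 2"
    and w: "1 \<le> norm w" "norm w \<le> norm \<xi> + C * t * e" "norm (w - 1) \<le> L * e"
  shows "ln (norm (blaschke (Some \<alpha>) w / blaschke (Some \<alpha>) \<xi>)) \<le>
    (6 * (1 + 3 * C) * (L + 1) / \<kappa> ^ 3 + 4 * C / \<kappa> ^ 2) * t * e"
proof -
  note bounds = norm_perturbation_bounds[OF d C \<xi>[unfolded t_def] w[unfolded t_def e_def],
      folded t_def e_def]
  have "0 < \<kappa>" "0 \<le> t" "0 \<le> norm w ^ 2 - 1"
    using d \<xi>(1) w(1) by (simp_all add: \<kappa>_def t_def one_le_power)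
  have "ln (norm (blaschke (Some \<alpha>) w / blaschke (Some \<alpha>) \<xi>)) \<le>
     (norm w ^ 2 - 1) * (2 * norm (w - \<xi>) / \<kappa> ^ 3) + max 0 (norm w ^ 2 - norm \<xi> ^ 2) / \<kappa> ^ 2"
    unfolding \<kappa>_def using d \<alpha> w(1) \<xi>(1) bounds(1,2)
    by (intro ln_norm_blaschke_ratio_le norm_diff_ge_of_gap) auto
  also have "\<dots> \<le> (3 * (1 + 3 * C) * t) * (2 * ((L + 1) * e) / \<kappa> ^ 3) + (4 * C * t * e) / \<kappa> ^ 2"
    using bounds(3-5) \<open>0 < \<kappa>\<close> \<open>0 \<le> t\<close> \<open>0 \<le> norm w ^ 2 - 1\<close> C L
    by (intro add_mono mult_mono divide_right_mono) auto
  also have "\<dots> = (6 * (1 + 3 * C) * (L + 1) / \<kappa> ^ 3 + 4 * C / \<kappa> ^ 2) * t * e"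
    by (simp add: field_simps)
  finally show ?thesis .
qed

lemma rs_chart_loc_zero [simp]: "rs_chart_loc f p 0 = f p"
  by (cases p) (auto simp: rs_chart_loc_def rs_inv_def)

lemma holomorphic_tendsto_at_centre:
  assumes "g holomorphic_on ball 0 e" "0 < e" "t \<longlonglongrightarrow> 0"
  shows "(\<lambda>n. g (t n)) \<longlonglongrightarrow> g 0"
  using assms
  by (metis centre_in_ball continuous_on_eq_continuous_at holomorphic_on_imp_continuous_on
      isCont_tendsto_compose open_ball)

lemma chart_limit_finite:
  assumes "(\<lambda>v. the (c v)) holomorphic_on ball 0 e" "0 < e" "\<forall>v\<in>ball 0 e. c v \<noteq> None"
    and "t \<longlonglongrightarrow> 0" "eventually (\<lambda>n. c (t n) = Some (w n)) sequentially" "w \<longlonglongrightarrow> z"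
  shows "c 0 = Some z"
proof -
  have "(\<lambda>n. the (c (t n))) \<longlonglongrightarrow> the (c 0)"
    using holomorphic_tendsto_at_centre assms(1,2,4) by blast
  moreover have "eventually (\<lambda>n. the (c (t n)) = w n) sequentially"
    using assms(5) by eventually_elim simp
  ultimately have "w \<longlonglongrightarrow> the (c 0)"
    by (rule Lim_transform_eventually)
  then have "the (c 0) = z"
    using assms(6) LIMSEQ_unique by blast
  moreover have "c 0 \<noteq> None"
    using assms(2,3) by simp
  ultimately show ?thesis
    by auto
qed

lemma chart_limit_reciprocal:
  assumes "(\<lambda>v. the (rs_inv (c v))) holomorphic_on ball 0 e" "0 < e" "\<forall>v\<in>ball 0 e. c v \<noteq> Some 0"
    and t: "t \<longlonglongrightarrow> 0" and chart: "eventually (\<lambda>n. c (t n) = Some (w n)) sequentially" and "w \<longlonglongrightarrow> z"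
  shows "c 0 = Some z"
proof -
  define h where "h = (\<lambda>v. the (rs_inv (c v)))"
  have "(\<lambda>n. h (t n)) \<longlonglongrightarrow> h 0"
    using holomorphic_tendsto_at_centre assms(1,2) t unfolding h_def by blast
  with \<open>w \<longlonglongrightarrow> z\<close> have "(\<lambda>n. w n * h (t n)) \<longlonglongrightarrow> z * h 0"
    by (rule tendsto_mult)
  moreover have "eventually (\<lambda>n. w n * h (t n) = 1) sequentially"
    using chart tendstoD[OF t \<open>0 < e\<close>]
  proof eventually_elim
    case (elim n)
    then have "w n \<noteq> 0"
      using assms(3) by (force simp: dist_commute)
    then show ?case
      using elim by (simp add: h_def rs_inv_def)
  qed
  then have "(\<lambda>n. w n * h (t n)) \<longlonglongrightarrow> 1"
    by (rule Lim_transform_eventually[OF tendsto_const, OF eventually_mono]) simp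
  ultimately have zh: "z * h 0 = 1"
    using LIMSEQ_unique by blast
  have "c 0 \<noteq> Some 0"
    using assms(2,3) by simp
  then obtain q where "c 0 = Some q" "q \<noteq> 0"
    using zh by (cases "c 0") (auto simp: h_def rs_inv_def)
  then show ?thesis
    using zh by (simp add: h_def rs_inv_def field_simps)
qed

lemma rs_analytic_at_chart_limit:
  assumes "rs_analytic_at f p" and "t \<longlonglongrightarrow> 0"
    and "eventually (\<lambda>n. rs_chart_loc f p (t n) = Some (w n)) sequentially" and "w \<longlonglongrightarrow> z"
  shows "f p = Some z"
proof -
  obtain e where "e > 0" and
    "((\<forall>v\<in>ball 0 e. rs_chart_loc f p v \<noteq> None) \<and>
         (\<lambda>v. the (rs_chart_loc f p v)) holomorphic_on ball 0 e)
    \<or> ((\<forall>v\<in>ball 0 e. rs_chart_loc f p v \<noteq> Some 0) \<and>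
         (\<lambda>v. the (rs_inv (rs_chart_loc f p v))) holomorphic_on ball 0 e)"
    using assms(1) unfolding rs_analytic_at_def by blast
  then have "rs_chart_loc f p 0 = Some z"
    using chart_limit_finite[OF _ _ _ assms(2-4)] chart_limit_reciprocal[OF _ _ _ assms(2-4)] by blast
  then show ?thesis
    by simp
qed

lemma rs_analytic_at_rs_inv_limit:
  assumes "rs_analytic_at f (rs_inv (Some l))" and y: "y \<longlonglongrightarrow> l"
    and "\<And>n. f (rs_inv (Some (y n))) = Some (w n)" and "w \<longlonglongrightarrow> z"
  shows "f (rs_inv (Some l)) = Some z"
proof (cases "l = 0")
  case True
  then show ?thesis
    using assms by (intro rs_analytic_at_chart_limit[where t = y and w = w])
      (auto simp: rs_chart_loc_def rs_inv_def)
next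
  case False
  have "(\<lambda>n. 1 / y n - 1 / l) \<longlonglongrightarrow> 0"
    using tendsto_diff[OF tendsto_divide[OF tendsto_const[of 1] y False] tendsto_const[of "1 / l"]] by simp
  moreover have "eventually (\<lambda>n. y n \<noteq> 0) sequentially"
    using tendsto_imp_eventually_ne[OF y False] .
  then have "eventually (\<lambda>n. rs_chart_loc f (Some (1 / l)) (1 / y n - 1 / l) = Some (w n)) sequentially"
  proof eventually_elim
    case (elim n)
    then show ?case
      using assms(3)[of n] by (simp add: rs_chart_loc_def rs_inv_def)
  qed
  ultimately show ?thesis
    using assms False by (simp add: rs_inv_def rs_analytic_at_chart_limit)
qed

lemma holomorphic_on_ball_translate:
  assumes "g holomorphic_on ball 0 e"
  shows "(\<lambda>v. g (v - p)) holomorphic_on ball p e"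
proof -
  have "(\<lambda>v. v - p) ` ball p e \<subseteq> ball 0 e"
    by (auto simp: dist_norm norm_minus_commute)
  moreover have "(\<lambda>v. v - p) holomorphic_on ball p e"
    by (intro holomorphic_intros)
  ultimately show ?thesis
    using holomorphic_on_compose_gen[OF _ assms, of "\<lambda>v. v - p" "ball p e"] by (simp add: o_def)
qed

lemma rs_analytic_at_Some_field_differentiable:
  assumes "rs_analytic_at f (Some p)" "open S" "p \<in> S" "\<And>v. v \<in> S \<Longrightarrow> f (Some v) \<noteq> None"
  shows "(\<lambda>v. the (f (Some v))) field_differentiable at p"
proof -
  have chart: "rs_chart_loc f (Some p) (v - p) = f (Some v)" for v
    by (simp add: rs_chart_loc_def)
  obtain e where "e > 0" and alt:
    "(\<lambda>v. the (rs_chart_loc f (Some p) v)) holomorphic_on ball 0 e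
    \<or> ((\<forall>v\<in>ball 0 e. rs_chart_loc f (Some p) v \<noteq> Some 0) \<and>
         (\<lambda>v. the (rs_inv (rs_chart_loc f (Some p) v))) holomorphic_on ball 0 e)"
    using assms(1) unfolding rs_analytic_at_def by blast
  define T where "T = S \<inter> ball p e"
  have T: "open T" "p \<in> T"
    using assms \<open>e > 0\<close> by (auto simp: T_def)
  show ?thesis
  proof (cases "(\<lambda>v. the (rs_chart_loc f (Some p) v)) holomorphic_on ball 0 e")
    case True
    then have "(\<lambda>v. the (f (Some v))) holomorphic_on ball p e"
      using holomorphic_on_ball_translate[OF True, of p] by (simp add: chart)
    then show ?thesis
      using \<open>e > 0\<close> by (auto intro: holomorphic_on_imp_differentiable_at)
  next
    case False
    define h where "h = (\<lambda>v. the (rs_inv (f (Some v))))"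
    have "(\<lambda>v. the (rs_inv (rs_chart_loc f (Some p) v))) holomorphic_on ball 0 e"
      using False alt by blast
    from holomorphic_on_ball_translate[OF this, of p] have "h holomorphic_on ball p e"
      by (simp add: h_def chart)
    moreover have h: "h v \<noteq> 0 \<and> the (f (Some v)) = 1 / h v" if v: "v \<in> T" for v
    proof -
      have "f (Some v) \<noteq> Some 0"
        using False alt that chart[of v] by (auto simp: T_def dist_norm norm_minus_commute)
      moreover obtain q where "f (Some v) = Some q"
        using assms(4) v by (auto simp: T_def)
      ultimately show ?thesis
        by (simp add: h_def rs_inv_def)
    qed
    ultimately have "(\<lambda>v. 1 / h v) holomorphic_on T"
      by (intro holomorphic_intros) (auto simp: T_def elim: holomorphic_on_subset)
    then have "(\<lambda>v. the (f (Some v))) holomorphic_on T"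
      by (rule holomorphic_transform) (use h in auto)
    then show ?thesis
      using T by (auto intro: holomorphic_on_imp_differentiable_at)
  qed
qed

lemma rs_analytic_Some_holomorphic:
  assumes "open S" "\<And>v. v \<in> S \<Longrightarrow> rs_analytic_at f (Some v)" "\<And>v. v \<in> S \<Longrightarrow> f (Some v) \<noteq> None"
  shows "(\<lambda>v. the (f (Some v))) holomorphic_on S"
  using assms rs_analytic_at_Some_field_differentiable
  by (simp add: holomorphic_on_open field_differentiable_def)

lemma rs_inv_Dstar:
  assumes "x \<in> Dstar"
  shows "norm (the (rs_inv x)) \<le> 1 \<and> rs_inv (Some (the (rs_inv x))) = x"
proof (cases x)
  case (Some q)
  then have "1 < norm q"
    using assms by (auto simp: ext_disc_def)
  then show ?thesis
    using Some by (auto simp: rs_inv_def norm_divide)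
qed (auto simp: rs_inv_def)

lemma rs_inv_cball:
  assumes "norm l \<le> 1" "\<rho> < 1"
  shows "rs_inv (Some l) \<in> ext_disc \<rho> \<and> (rs_inv (Some l) \<in> Dstar \<or> (\<exists>v. norm v = 1 \<and> rs_inv (Some l) = Some v))"
proof (cases "l = 0")
  case False
  then have "1 \<le> norm (1 / l)"
    using assms(1) by (simp add: norm_divide divide_simps)
  then show ?thesis
    using False assms(2) by (auto simp: ext_disc_def rs_inv_def)
qed (auto simp: ext_disc_def rs_inv_def)

(* Points of Dstar are coded by their reciprocals in the closed unit disc.  A limit of such codes
   is the code either of a point of Dstar, whose image would lie in E, or of a point of the circle. *)
lemma rs_analytic_boundary_value:
  assumes an: "rs_analytic_on f (ext_disc \<rho>)" and "\<rho> < 1"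
    and onto: "f ` Dstar = insert None (Some ` E)" and z: "z \<in> closure E" "z \<notin> E"
  obtains v where "norm v = 1" "f (Some v) = Some z"
proof -
  obtain w where w: "\<And>n. w n \<in> E" "w \<longlonglongrightarrow> z"
    using z(1) closure_sequential by metis
  have "\<forall>n. \<exists>x. x \<in> Dstar \<and> f x = Some (w n)"
    using w(1) onto by (metis (no_types, lifting) image_iff insertI2 rev_image_eqI)
  then obtain x where x: "\<And>n. x n \<in> Dstar" "\<And>n. f (x n) = Some (w n)"
    by metis
  define y where "y n = the (rs_inv (x n))" for n
  obtain l r where l: "l \<in> cball 0 1" "strict_mono r" "(y \<circ> r) \<longlonglongrightarrow> l"
    using compact_cball[of "0::complex" 1] conjunct1[OF rs_inv_Dstar[OF x(1)]]
    unfolding compact_def y_def by (metis mem_cball_0)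
  have "f (rs_inv (Some l)) = Some z"
  proof (rule rs_analytic_at_rs_inv_limit[OF _ l(3)])
    show "rs_analytic_at f (rs_inv (Some l))"
      using an rs_inv_cball[of l \<rho>] l(1) \<open>\<rho> < 1\<close> by (simp add: rs_analytic_on_def)
    show "f (rs_inv (Some ((y \<circ> r) n))) = Some ((w \<circ> r) n)" for n
      using x rs_inv_Dstar by (simp add: y_def)
    show "(w \<circ> r) \<longlonglongrightarrow> z"
      using LIMSEQ_subseq_LIMSEQ[OF w(2) l(2)] .
  qed
  moreover have "rs_inv (Some l) \<notin> Dstar"
    using onto z(2) calculation by (metis image_eqI insert_iff option.inject option.simps(3) imageE)
  ultimately show thesis
    using rs_inv_cball[of l \<rho>] l(1) \<open>\<rho> < 1\<close> that by auto
qed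

lemma rs_inj_finite_near_circle:
  assumes inj: "inj_on f (ext_disc \<rho>)" and "\<rho> \<le> 1" and x0: "x0 \<in> Dstar" "f x0 = None"
  obtains r where "1 < r" "\<And>v. \<rho> < norm v \<Longrightarrow> norm v < r \<Longrightarrow> f (Some v) \<noteq> None"
proof
  define r where "r = (case x0 of None \<Rightarrow> 2 | Some q \<Rightarrow> norm q)"
  show "1 < r"
    using x0(1) by (auto simp: r_def ext_disc_def split: option.splits)
  fix v :: complex
  assume v: "\<rho> < norm v" "norm v < r"
  have "x0 \<in> ext_disc \<rho>" "Some v \<in> ext_disc \<rho>"
    using x0(1) \<open>\<rho> \<le> 1\<close> v(1) by (auto simp: ext_disc_def)
  then have "f (Some v) = None \<Longrightarrow> Some v = x0"
    using inj x0(2) by (metis inj_onD)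
  then show "f (Some v) \<noteq> None"
    using v(2) by (cases x0) (auto simp: r_def)
qed

lemma analytic_jordan_curve_closures:
  assumes "analytic_jordan_curve \<Gamma>"
  shows "closure (inside \<Gamma>) = inside \<Gamma> \<union> \<Gamma>" "closure (outside \<Gamma>) = outside \<Gamma> \<union> \<Gamma>"
proof -
  obtain \<psi> r1 r2 where \<psi>: "r1 < 1" "1 < r2" "\<psi> holomorphic_on {z. r1 < norm z \<and> norm z < r2}"
     "inj_on \<psi> {z. r1 < norm z \<and> norm z < r2}" "\<Gamma> = \<psi> ` sphere 0 1"
    using assms unfolding analytic_jordan_curve_def by blast
  have circle: "path_image (circlepath 0 1) \<subseteq> {z. r1 < norm z \<and> norm z < r2}"
    using \<psi> by (auto simp: path_image_circlepath)
  have simple: "simple_path (\<psi> \<circ> circlepath 0 1)"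
    using \<psi>(4) holomorphic_on_imp_continuous_on[OF \<psi>(3)] circle
    by (intro simple_path_continuous_image)
      (auto simp: simple_path_circlepath intro: continuous_on_subset inj_on_subset)
  have closed: "pathfinish (\<psi> \<circ> circlepath 0 1) = pathstart (\<psi> \<circ> circlepath 0 1)"
    by (simp add: pathfinish_compose pathstart_compose)
  have "path_image (\<psi> \<circ> circlepath 0 1) = \<Gamma>"
    by (simp add: path_image_compose path_image_circlepath \<psi>(5))
  with Jordan_inside_outside[OF simple closed]
  show "closure (inside \<Gamma>) = inside \<Gamma> \<union> \<Gamma>" "closure (outside \<Gamma>) = outside \<Gamma> \<union> \<Gamma>"
    by (simp_all add: closure_Un_frontier)
qed

lemma injective_disc_extension_not_inside:
  fixes \<Phi> :: "complex \<Rightarrow> complex"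
  assumes "inj_on \<Phi> (ball 0 R)" "\<Phi> ` ball 0 1 = inside \<Gamma>" "1 \<le> norm \<xi>" "norm \<xi> < R"
  shows "\<Phi> \<xi> \<notin> inside \<Gamma>"
proof
  assume "\<Phi> \<xi> \<in> inside \<Gamma>"
  then obtain \<eta> where \<eta>: "norm \<eta> < 1" "\<Phi> \<xi> = \<Phi> \<eta>"
    using assms(2) by (metis imageE mem_ball_0)
  have "\<xi> = \<eta>"
    by (rule inj_onD[OF assms(1) \<eta>(2)]) (use assms(3,4) \<eta>(1) in auto)
  then show False
    using \<eta>(1) assms(3) by simp
qed

lemma injective_disc_extension_circle:
  fixes \<Phi> :: "complex \<Rightarrow> complex"
  assumes "continuous_on (ball 0 R) \<Phi>" "inj_on \<Phi> (ball 0 R)" "1 < R"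
    and onto: "\<Phi> ` ball 0 1 = inside \<Gamma>" and closure: "closure (inside \<Gamma>) = inside \<Gamma> \<union> \<Gamma>"
    and "norm \<zeta> = 1"
  shows "\<Phi> \<zeta> \<in> \<Gamma>"
proof -
  have "closure (ball 0 1) \<subseteq> ball (0::complex) R"
    using assms(3) by auto
  then have "continuous_on (closure (ball 0 1)) \<Phi>"
    using assms(1) continuous_on_subset by blast
  then have "\<Phi> ` closure (ball 0 1) \<subseteq> closure (inside \<Gamma>)"
    using onto by (intro image_closure_subset) (auto simp: closure_subset)
  moreover have "\<zeta> \<in> closure (ball 0 1)"
    using \<open>norm \<zeta> = 1\<close> by simp
  ultimately have "\<Phi> \<zeta> \<in> inside \<Gamma> \<union> \<Gamma>"
    unfolding closure by blast
  then show ?thesis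
    using injective_disc_extension_not_inside[OF assms(2) onto, of \<zeta>] assms(3,6) by simp
qed

lemma injective_disc_extension_exterior:
  fixes \<Phi> :: "complex \<Rightarrow> complex"
  assumes "continuous_on (ball 0 R) \<Phi>" and inj: "inj_on \<Phi> (ball 0 R)"
    and onto: "\<Phi> ` ball 0 1 = inside \<Gamma>" and closure: "closure (inside \<Gamma>) = inside \<Gamma> \<union> \<Gamma>"
    and \<xi>: "1 < norm \<xi>" "norm \<xi> < R"
  shows "\<Phi> \<xi> \<in> outside \<Gamma>"
proof -
  have "cball 0 1 \<subseteq> ball 0 R"
    using \<xi> by auto
  then have "continuous_on (cball 0 1) \<Phi>"
    using assms(1) continuous_on_subset by blast
  then have "closed (\<Phi> ` cball 0 1)"
    by (intro compact_imp_closed compact_continuous_image) auto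
  moreover have "inside \<Gamma> \<subseteq> \<Phi> ` cball 0 1"
    unfolding onto[symmetric] by (intro image_mono) auto
  ultimately have "\<Gamma> \<subseteq> \<Phi> ` cball 0 1"
    using closure closure_minimal by blast
  moreover have "\<Phi> \<xi> \<notin> \<Phi> ` cball 0 1"
  proof
    assume "\<Phi> \<xi> \<in> \<Phi> ` cball 0 1"
    then obtain \<eta> where \<eta>: "norm \<eta> \<le> 1" "\<Phi> \<xi> = \<Phi> \<eta>"
      by auto
    have "\<xi> = \<eta>"
      by (rule inj_onD[OF inj \<eta>(2)]) (use \<xi> \<eta>(1) in auto)
    then show False
      using \<eta>(1) \<xi>(1) by simp
  qed
  ultimately show ?thesis
    using injective_disc_extension_not_inside[OF inj onto, of \<xi>] \<xi> by (auto simp: outside_inside)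
qed

locale conformal_welding =
  fixes \<Gamma> :: "complex set" and \<Phi>1 :: "complex \<Rightarrow> complex" and \<Phi>2 :: "riem \<Rightarrow> riem"
    and R \<rho> :: real
  assumes jordan: "analytic_jordan_curve \<Gamma>"
    and R: "1 < R"
    and \<Phi>1_holo: "\<Phi>1 holomorphic_on ball 0 R"
    and \<Phi>1_inj: "inj_on \<Phi>1 (ball 0 R)"
    and \<Phi>1_onto: "\<Phi>1 ` ball 0 1 = inside \<Gamma>"
    and \<rho>: "\<rho> < 1"
    and \<Phi>2_analytic: "rs_analytic_on \<Phi>2 (ext_disc \<rho>)"
    and \<Phi>2_inj: "inj_on \<Phi>2 (ext_disc \<rho>)"
    and \<Phi>2_onto: "\<Phi>2 ` Dstar = insert None (Some ` outside \<Gamma>)"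
    and base_point: "\<Phi>2 (Some 1) = Some (\<Phi>1 1)"
    and \<Phi>1_deriv: "norm (deriv \<Phi>1 1) = 1"
    and \<Phi>2_deriv: "norm (deriv (\<lambda>v. the (\<Phi>2 (Some v))) 1) = 1"
begin

definition welding_map :: "complex \<Rightarrow> complex" where
  "welding_map \<xi> = the (inv_into (ext_disc \<rho>) \<Phi>2 (Some (\<Phi>1 \<xi>)))"

lemma welding_map_eqI:
  assumes "\<rho> < norm v" "\<Phi>2 (Some v) = Some (\<Phi>1 \<xi>)"
  shows "welding_map \<xi> = v"
proof -
  have "Some v \<in> ext_disc \<rho>"
    using assms(1) by (simp add: ext_disc_def)
  then show ?thesis
    using inv_into_f_f[OF \<Phi>2_inj] assms(2) by (metis option.sel welding_map_def)
qed

lemma \<Phi>1_circle: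
  assumes "norm \<zeta> = 1"
  shows "\<Phi>1 \<zeta> \<in> \<Gamma>"
  using injective_disc_extension_circle[OF holomorphic_on_imp_continuous_on[OF \<Phi>1_holo]
      \<Phi>1_inj R \<Phi>1_onto analytic_jordan_curve_closures(1)[OF jordan] assms] .

lemma \<Phi>1_exterior:
  assumes "1 < norm \<xi>" "norm \<xi> < R"
  shows "\<Phi>1 \<xi> \<in> outside \<Gamma>"
  using injective_disc_extension_exterior[OF holomorphic_on_imp_continuous_on[OF \<Phi>1_holo]
      \<Phi>1_inj \<Phi>1_onto analytic_jordan_curve_closures(1)[OF jordan] assms] .

lemma \<Phi>2_circle_preimage:
  assumes "norm \<zeta> = 1"
  obtains v where "norm v = 1" "\<Phi>2 (Some v) = Some (\<Phi>1 \<zeta>)"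
proof (rule rs_analytic_boundary_value[OF \<Phi>2_analytic \<rho> \<Phi>2_onto])
  show "\<Phi>1 \<zeta> \<notin> outside \<Gamma>"
    using \<Phi>1_circle[OF assms] outside_no_overlap by blast
  show "\<Phi>1 \<zeta> \<in> closure (outside \<Gamma>)"
    using \<Phi>1_circle[OF assms] analytic_jordan_curve_closures(2)[OF jordan] by simp
qed (use that in blast)

lemma welding_map_circle:
  assumes "norm \<zeta> = 1"
  shows "norm (welding_map \<zeta>) = 1"
  using \<Phi>2_circle_preimage[OF assms] welding_map_eqI \<rho> by metis

lemma welding_map_one: "welding_map 1 = 1"
  using welding_map_eqI[OF _ base_point] \<rho> by simp

(* The hypotheses do not force Phi2 infinity = infinity, so the preimage of Phi1 xi must be pinned
   down by w, a point where Phi2 is known to be finite. *)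
lemma welding_map_exterior:
  assumes "1 < norm \<xi>" "norm \<xi> < R" "\<rho> < norm w" "\<Phi>2 (Some w) = Some (\<Phi>1 \<xi>)"
  shows "1 < norm w"
proof -
  obtain x where x: "x \<in> Dstar" "\<Phi>2 x = Some (\<Phi>1 \<xi>)"
    using \<Phi>1_exterior[OF assms(1,2)] \<Phi>2_onto by (metis image_iff image_eqI insertI2)
  have "Dstar \<subseteq> ext_disc \<rho>"
    using \<rho> by (auto simp: ext_disc_def)
  then have "x = Some w"
    using x assms(3,4) \<Phi>2_inj by (metis ext_disc_def inj_onD insertI2 image_eqI mem_Collect_eq subsetD)
  then show ?thesis
    using x(1) by (auto simp: ext_disc_def)
qed

definition exterior_map :: "complex \<Rightarrow> complex" where
  "exterior_map v = the (\<Phi>2 (Some v))"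

lemma exterior_map_annulus:
  obtains A where "open A" "sphere 0 1 \<subseteq> A"
    "\<And>v. v \<in> A \<Longrightarrow> \<rho> < norm v \<and> \<Phi>2 (Some v) = Some (exterior_map v)"
    "exterior_map holomorphic_on A" "inj_on exterior_map A"
proof -
  obtain x0 where "x0 \<in> Dstar" "\<Phi>2 x0 = None"
    using \<Phi>2_onto by (metis imageE insertI1)
  then obtain r where "1 < r" and finite: "\<And>v. \<rho> < norm v \<Longrightarrow> norm v < r \<Longrightarrow> \<Phi>2 (Some v) \<noteq> None"
    using rs_inj_finite_near_circle[OF \<Phi>2_inj] \<rho> by (metis less_imp_le)
  define A where "A = ball (0::complex) r - cball 0 \<rho>"
  have A: "v \<in> A \<longleftrightarrow> \<rho> < norm v \<and> norm v < r" for v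
    by (auto simp: A_def)
  have "open A"
    by (simp add: A_def open_Diff)
  have Some_A: "Some v \<in> ext_disc \<rho>" if "v \<in> A" for v
    using that by (simp add: A ext_disc_def)
  have finite_A: "\<Phi>2 (Some v) = Some (exterior_map v)" if "v \<in> A" for v
    using finite that by (auto simp: A exterior_map_def)
  have holo: "exterior_map holomorphic_on A"
    unfolding exterior_map_def[abs_def] using \<open>open A\<close> \<Phi>2_analytic Some_A finite
    by (intro rs_analytic_Some_holomorphic) (auto simp: rs_analytic_on_def A)
  have inj: "inj_on exterior_map A"
    using Some_A finite_A \<Phi>2_inj by (metis (mono_tags, lifting) inj_onD inj_onI option.inject)
  have "sphere 0 1 \<subseteq> A"
    using \<rho> \<open>1 < r\<close> by (auto simp: A)
  show thesis
    by (rule that[OF \<open>open A\<close> \<open>sphere 0 1 \<subseteq> A\<close> _ holo inj]) (use finite_A in \<open>auto simp: A\<close>)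
qed

lemma exterior_map_local_inverse:
  obtains \<Omega> g where "open \<Omega>" "\<Phi>1 ` sphere 0 1 \<subseteq> \<Omega>" "g holomorphic_on \<Omega>"
    "\<And>z. z \<in> \<Omega> \<Longrightarrow> \<rho> < norm (g z) \<and> \<Phi>2 (Some (g z)) = Some z" "norm (deriv g (\<Phi>1 1)) = 1"
proof -
  obtain A where A: "open A" "sphere 0 1 \<subseteq> A"
      "\<And>v. v \<in> A \<Longrightarrow> \<rho> < norm v \<and> \<Phi>2 (Some v) = Some (exterior_map v)"
    and holo: "exterior_map holomorphic_on A" and inj: "inj_on exterior_map A"
    using exterior_map_annulus by blast
  obtain g where g: "g holomorphic_on exterior_map ` A"
      "\<And>v. v \<in> A \<Longrightarrow> deriv exterior_map v * deriv g (exterior_map v) = 1"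
      "\<And>v. v \<in> A \<Longrightarrow> g (exterior_map v) = v"
    using holomorphic_has_inverse[OF holo \<open>open A\<close> inj] by blast
  have circle: "\<Phi>1 \<zeta> \<in> exterior_map ` A" if \<zeta>: "norm \<zeta> = 1" for \<zeta>
  proof -
    obtain v where "norm v = 1" "\<Phi>2 (Some v) = Some (\<Phi>1 \<zeta>)"
      using \<Phi>2_circle_preimage[OF \<zeta>] by blast
    then show ?thesis
      using A(2) A(3)[of v] by (intro rev_image_eqI[of v]) auto
  qed
  have "exterior_map 1 = \<Phi>1 1" "1 \<in> A"
    using base_point A(2) by (auto simp: exterior_map_def)
  then have deriv: "norm (deriv g (\<Phi>1 1)) = 1"
    using g(2)[of 1] \<Phi>2_deriv unfolding exterior_map_def[abs_def] by (metis norm_mult norm_one mult_1)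
  show thesis
  proof (rule that[OF open_mapping_thm3[OF holo \<open>open A\<close> inj] _ g(1) _ deriv])
    show "\<rho> < norm (g z) \<and> \<Phi>2 (Some (g z)) = Some z" if "z \<in> exterior_map ` A" for z
      using that g(3) A(3) by auto
  qed (use circle in auto)
qed

lemma welding_map_holomorphic:
  obtains U where "open U" "sphere 0 1 \<subseteq> U" "U \<subseteq> ball 0 R" "welding_map holomorphic_on U"
    "norm (deriv welding_map 1) = 1"
    "\<And>\<xi>. \<xi> \<in> U \<Longrightarrow> \<rho> < norm (welding_map \<xi>) \<and> \<Phi>2 (Some (welding_map \<xi>)) = Some (\<Phi>1 \<xi>)"
proof -
  obtain \<Omega> g where "open \<Omega>" "\<Phi>1 ` sphere 0 1 \<subseteq> \<Omega>" "g holomorphic_on \<Omega>"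
      and g: "\<And>z. z \<in> \<Omega> \<Longrightarrow> \<rho> < norm (g z) \<and> \<Phi>2 (Some (g z)) = Some z" "norm (deriv g (\<Phi>1 1)) = 1"
    using exterior_map_local_inverse by blast
  define U where "U = ball 0 R \<inter> \<Phi>1 -` \<Omega>"
  have "open U"
    unfolding U_def using \<open>open \<Omega>\<close> holomorphic_on_imp_continuous_on[OF \<Phi>1_holo]
    by (intro continuous_open_preimage) auto
  have "sphere 0 1 \<subseteq> U"
    using \<open>\<Phi>1 ` sphere 0 1 \<subseteq> \<Omega>\<close> R by (auto simp: U_def)
  have local_inverse: "welding_map \<xi> = g (\<Phi>1 \<xi>)" if "\<xi> \<in> U" for \<xi>
    using welding_map_eqI g(1) that by (auto simp: U_def)
  have "(g \<circ> \<Phi>1) holomorphic_on U"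
    using holomorphic_on_subset[OF \<Phi>1_holo] \<open>g holomorphic_on \<Omega>\<close>
    by (intro holomorphic_on_compose_gen) (auto simp: U_def)
  then have holo: "welding_map holomorphic_on U"
    by (rule holomorphic_transform) (use local_inverse in auto)
  have "1 \<in> U"
    using \<open>sphere 0 1 \<subseteq> U\<close> by auto
  then have "eventually (\<lambda>x. x \<in> U) (nhds 1)"
    using eventually_nhds_in_open[OF \<open>open U\<close>] by blast
  then have "eventually (\<lambda>x. welding_map x = (g \<circ> \<Phi>1) x) (nhds 1)"
    by eventually_elim (simp add: local_inverse)
  then have "deriv welding_map 1 = deriv (g \<circ> \<Phi>1) 1"
    by (rule deriv_cong_ev) simp
  also have "\<dots> = deriv g (\<Phi>1 1) * deriv \<Phi>1 1"
    using R \<open>1 \<in> U\<close> \<open>open \<Omega>\<close>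
    by (intro deriv_chain holomorphic_on_imp_differentiable_at[OF \<Phi>1_holo]
        holomorphic_on_imp_differentiable_at[OF \<open>g holomorphic_on \<Omega>\<close>]) (auto simp: U_def)
  finally have "norm (deriv welding_map 1) = 1"
    using g(2) \<Phi>1_deriv by (simp add: norm_mult)
  show thesis
    by (rule that[OF \<open>open U\<close> \<open>sphere 0 1 \<subseteq> U\<close> _ holo \<open>norm (deriv welding_map 1) = 1\<close>])
      (use local_inverse g(1) in \<open>auto simp: U_def\<close>)
qed

lemma welding_map_growth:
  obtains \<epsilon> C L where "0 < \<epsilon>" "0 < C" "0 < L"
    "\<And>\<xi>. 1 \<le> norm \<xi> \<Longrightarrow> norm \<xi> \<le> 1 + \<epsilon> \<Longrightarrow> 1 \<le> norm (welding_map \<xi>) \<and>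
       norm (welding_map \<xi>) \<le> norm \<xi> + C * (norm \<xi> - 1) * norm (\<xi> - 1) \<and>
       norm (welding_map \<xi> - 1) \<le> L * norm (\<xi> - 1)"
proof -
  obtain U where U: "open U" "sphere 0 1 \<subseteq> U" "U \<subseteq> ball 0 R" "welding_map holomorphic_on U"
      "norm (deriv welding_map 1) = 1"
      "\<And>\<xi>. \<xi> \<in> U \<Longrightarrow> \<rho> < norm (welding_map \<xi>) \<and> \<Phi>2 (Some (welding_map \<xi>)) = Some (\<Phi>1 \<xi>)"
    using welding_map_holomorphic by blast
  have "1 \<le> norm (welding_map \<xi>)" if "\<xi> \<in> U" "1 \<le> norm \<xi>" for \<xi>
  proof (cases "norm \<xi> = 1")
    case False
    then show ?thesis
      using that U(3,6) welding_map_exterior[of \<xi> "welding_map \<xi>"] by fastforce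
  qed (use welding_map_circle in simp)
  then show thesis
    using that circle_preserving_growth[OF U(4,1,2) welding_map_circle U(5)] welding_map_one
    by (metis (no_types, lifting))
qed

end

lemma rs_closed_Dstar_gap:
  assumes "rs_closed K" "K \<subseteq> Dstar"
  obtains d where "0 < d" "d \<le> 1" "\<And>\<alpha>. Some \<alpha> \<in> K \<Longrightarrow> 1 + d \<le> norm \<alpha>"
proof (rule closed_outside_cball_gap[of "{z. Some z \<in> K}"])
  show "closed {z. Some z \<in> K}"
    using assms(1) by (simp add: rs_closed_def)
  show "1 < norm z" if "z \<in> {z. Some z \<in> K}" for z
    using assms(2) that by (auto simp: ext_disc_def)
  fix d :: real
  assume "0 < d" "\<And>z. z \<in> {z. Some z \<in> K} \<Longrightarrow> 1 + d \<le> norm z"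
  then show thesis
    using that[of "min 1 d"] by force
qed

lemma ln_norm_blaschke_ratio_bound:
  fixes w \<xi> :: complex and a :: riem and d C L :: real
  defines "\<kappa> \<equiv> d / (2 * (1 + d))"
  assumes d: "0 < d" "d \<le> 1" and a: "\<And>\<alpha>. a = Some \<alpha> \<Longrightarrow> 1 + d \<le> norm \<alpha>"
    and "0 \<le> C" "0 \<le> L"
    and \<xi>: "1 \<le> norm \<xi>" "norm \<xi> \<le> 1 + d / (2 * (1 + 3 * C))"
    and w: "1 \<le> norm w" "norm w \<le> norm \<xi> + C * (norm \<xi> - 1) * norm (\<xi> - 1)"
      "norm (w - 1) \<le> L * norm (\<xi> - 1)"
  shows "ln (norm (blaschke a w / blaschke a \<xi>)) \<le>
    (C + 6 * (1 + 3 * C) * (L + 1) / \<kappa> ^ 3 + 4 * C / \<kappa> ^ 2) * (norm \<xi> - 1) * norm (\<xi> - 1)"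
proof -
  have "0 < \<kappa>"
    using d by (simp add: \<kappa>_def)
  then have K: "0 \<le> 6 * (1 + 3 * C) * (L + 1) / \<kappa> ^ 3 + 4 * C / \<kappa> ^ 2"
    using \<open>0 \<le> C\<close> \<open>0 \<le> L\<close> by simp
  have te: "0 \<le> (norm \<xi> - 1) * norm (\<xi> - 1)"
    using \<xi> by simp
  show ?thesis
  proof (cases a)
    case None
    have "ln (norm (blaschke a w / blaschke a \<xi>)) \<le> C * (norm \<xi> - 1) * norm (\<xi> - 1)"
      unfolding None using \<xi>(1) w(1,2) te \<open>0 \<le> C\<close> by (intro ln_norm_blaschke_None_ratio_le) auto
    also have "\<dots> \<le> (C + 6 * (1 + 3 * C) * (L + 1) / \<kappa> ^ 3 + 4 * C / \<kappa> ^ 2) * (norm \<xi> - 1) * norm (\<xi> - 1)"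
      using K te by (simp add: mult.assoc mult_right_mono)
    finally show ?thesis .
  next
    case (Some \<alpha>)
    have "(1 + 3 * C) * (norm \<xi> - 1) \<le> d / 2"
      using \<xi>(2) \<open>0 \<le> C\<close> by (simp add: field_simps)
    then have "ln (norm (blaschke a w / blaschke a \<xi>)) \<le>
        (6 * (1 + 3 * C) * (L + 1) / \<kappa> ^ 3 + 4 * C / \<kappa> ^ 2) * (norm \<xi> - 1) * norm (\<xi> - 1)"
      unfolding Some \<kappa>_def using d a[OF Some] \<open>0 \<le> C\<close> \<open>0 \<le> L\<close> \<xi>(1) w
      by (intro ln_norm_blaschke_Some_ratio_le) auto
    also have "\<dots> \<le> (C + 6 * (1 + 3 * C) * (L + 1) / \<kappa> ^ 3 + 4 * C / \<kappa> ^ 2) * (norm \<xi> - 1) * norm (\<xi> - 1)"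
      using \<open>0 \<le> C\<close> te by (simp add: mult.assoc mult_right_mono)
    finally show ?thesis .
  qed
qed

theorem mainTheorem8:
  fixes \<Gamma> :: "complex set" and u0 :: complex
    and \<Phi>1 :: "complex \<Rightarrow> complex" and \<Phi>2 :: "riem \<Rightarrow> riem"
    and R \<rho> :: real and F :: "complex \<Rightarrow> complex" and K :: "riem set"
  assumes jordan: "analytic_jordan_curve \<Gamma>"
    and u0: "u0 \<in> \<Gamma>"
    and R: "R > 1"
    and \<Phi>1_holo: "\<Phi>1 holomorphic_on ball 0 R"
    and \<Phi>1_inj: "inj_on \<Phi>1 (ball 0 R)"
    and \<Phi>1_onto: "\<Phi>1 ` ball 0 1 = inside \<Gamma>"
    and \<rho>: "0 < \<rho>" "\<rho> < 1"
    and \<Phi>2_an: "rs_analytic_on \<Phi>2 (ext_disc \<rho>)"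
    and \<Phi>2_inj: "inj_on \<Phi>2 (ext_disc \<rho>)"
    and \<Phi>2_onto: "\<Phi>2 ` Dstar = insert None (Some ` outside \<Gamma>)"
    and \<Phi>1_1: "\<Phi>1 1 = u0"
    and \<Phi>2_1: "\<Phi>2 (Some 1) = Some u0"
    and \<Phi>1_d: "norm (deriv \<Phi>1 1) = 1"
    and \<Phi>2_d: "norm (deriv (\<lambda>v. the (\<Phi>2 (Some v))) 1) = 1"
    and F_def: "F = (\<lambda>\<xi>. the (inv_into (ext_disc \<rho>) \<Phi>2 (Some (\<Phi>1 \<xi>))))"
    and K_sub: "K \<subseteq> Dstar"
    and K_closed: "rs_closed K"
  shows "\<exists>\<delta>>0. \<exists>C>0. \<forall>a\<in>K. \<forall>\<xi>. 1 \<le> norm \<xi> \<and> norm \<xi> \<le> 1 + \<delta> \<longrightarrow>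
           ln (norm (blaschke a (F \<xi>) / blaschke a \<xi>)) \<le> C * (norm \<xi> - 1) * norm (\<xi> - 1)"
proof -
  interpret conformal_welding \<Gamma> \<Phi>1 \<Phi>2 R \<rho>
    by unfold_locales (simp_all add: jordan R \<Phi>1_holo \<Phi>1_inj \<Phi>1_onto \<rho> \<Phi>2_an \<Phi>2_inj \<Phi>2_onto
        \<Phi>1_1 \<Phi>2_1 \<Phi>1_d \<Phi>2_d)
  have F: "F = welding_map"
    by (simp add: F_def welding_map_def fun_eq_iff)
  obtain \<epsilon> C L where "0 < \<epsilon>" "0 < C" "0 < L" and growth: "\<And>\<xi>. 1 \<le> norm \<xi> \<Longrightarrow> norm \<xi> \<le> 1 + \<epsilon> \<Longrightarrow>
      1 \<le> norm (F \<xi>) \<and> norm (F \<xi>) \<le> norm \<xi> + C * (norm \<xi> - 1) * norm (\<xi> - 1) \<and>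
      norm (F \<xi> - 1) \<le> L * norm (\<xi> - 1)"
    using welding_map_growth unfolding F by blast
  obtain d where d: "0 < d" "d \<le> 1" and gap: "\<And>\<alpha>. Some \<alpha> \<in> K \<Longrightarrow> 1 + d \<le> norm \<alpha>"
    using rs_closed_Dstar_gap[OF K_closed K_sub] by blast
  define \<kappa> where "\<kappa> = d / (2 * (1 + d))"
  define M where "M = C + 6 * (1 + 3 * C) * (L + 1) / \<kappa> ^ 3 + 4 * C / \<kappa> ^ 2"
  have "0 < \<kappa>"
    using d by (simp add: \<kappa>_def)
  show ?thesis
  proof (intro exI conjI ballI allI impI)
    show "0 < min \<epsilon> (d / (2 * (1 + 3 * C)))" "0 < M"
      using \<open>0 < \<epsilon>\<close> d \<open>0 < \<kappa>\<close> \<open>0 < C\<close> \<open>0 < L\<close> by (simp_all add: M_def add_pos_nonneg)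
    fix a and \<xi> :: complex
    assume "a \<in> K" and \<xi>: "1 \<le> norm \<xi> \<and> norm \<xi> \<le> 1 + min \<epsilon> (d / (2 * (1 + 3 * C)))"
    then show "ln (norm (blaschke a (F \<xi>) / blaschke a \<xi>)) \<le> M * (norm \<xi> - 1) * norm (\<xi> - 1)"
      unfolding M_def \<kappa>_def using growth[of \<xi>] gap d \<open>0 < C\<close> \<open>0 < L\<close>
      by (intro ln_norm_blaschke_ratio_bound) auto
  qed
qed

end
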